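(* Let $\mathcal{H}$ be a finite class of classifiers $h:\mathcal{X}\times\{-1,1\}\to\{0,1\}$ containing the two classifiers $\mathbf{1}[a=1]$ and $\mathbf{1}[a=-1]$, and suppose $\gamma>2\nu>0$. Let $\mathrm{OPT}$ be the optimal value of $$\min_{\pi\in\Delta(\mathcal{H})}\mathbb{E}_{h\sim\pi}\Big[\sum_{j=1}^n w_j\mathbf{1}\{h(X_j)\neq Y_j\}\Big]\ \text{ s.t. }\ \forall j\in\{\pm1\}:\ \mathrm{FPR}_j(\pi)-\mathrm{FPR}_{-j}(\pi)\le\gamma,$$ and let $\mathrm{OPT}'$ be the optimal value of the same problem with $\gamma$ replaced by $\gamma-2\nu$. Then $\mathrm{OPT}'-\mathrm{OPT}\le2\nu$.
   Context: $X_j=(\hat x_j,a_j)$ are points, $Y_j\in\{0,1\}$ labels, $w_j\ge0$ weights with $\sum_j w_j=1$. $\mathcal{D}_E$ is a fixed empirical distribution of labeled examples $(\hat x,a,y)$ containing negative examples of both groups, and $\mathrm{FPR}_j(\pi)=\mathbb{E}_{h\sim\pi}[\Pr_{\mathcal{D}_E}(h(x)=1\mid a=j,y\text{ negative})]$ for $\pi\in\Delta(\mathcal{H})$, the set of distributions over $\mathcal{H}$. *)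

theory Defs
  imports Main "HOL-Library.Multiset" Complex_Main
begin

(* A classifier maps a point (x, a) with group attribute a \<in> {-1,1} to a label in {0,1}. *)
type_synonym 'x classifier = "'x \<times> int \<Rightarrow> nat"

definition is_dist :: "'x classifier set \<Rightarrow> ('x classifier \<Rightarrow> real) \<Rightarrow> bool" where
  "is_dist H \<pi> \<longleftrightarrow> (\<forall>h\<in>H. \<pi> h \<ge> 0) \<and> (\<Sum>h\<in>H. \<pi> h) = 1"

(* D_E: empirical distribution = uniform distribution over a finite sample (list) of
   labeled examples (x, a, y). Pr_{D_E}(h(x)=1 | a=j, y=0). *)
definition cond_fpr :: "('x \<times> int \<times> nat) list \<Rightarrow> 'x classifier \<Rightarrow> int \<Rightarrow> real" where
  "cond_fpr D h j =
     real (length (filter (\<lambda>(x,a,y). a = j \<and> y = 0 \<and> h (x,a) = 1) D))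
     / real (length (filter (\<lambda>(x,a,y). a = j \<and> y = 0) D))"

definition FPR :: "'x classifier set \<Rightarrow> ('x \<times> int \<times> nat) list \<Rightarrow> int \<Rightarrow> ('x classifier \<Rightarrow> real) \<Rightarrow> real" where
  "FPR H D j \<pi> = (\<Sum>h\<in>H. \<pi> h * cond_fpr D h j)"

definition objective :: "'x classifier set \<Rightarrow> nat \<Rightarrow> (nat \<Rightarrow> 'x \<times> int) \<Rightarrow> (nat \<Rightarrow> nat) \<Rightarrow> (nat \<Rightarrow> real)
    \<Rightarrow> ('x classifier \<Rightarrow> real) \<Rightarrow> real" where
  "objective H n X Y w \<pi> = (\<Sum>h\<in>H. \<pi> h * (\<Sum>j<n. w j * (if h (X j) \<noteq> Y j then 1 else 0)))"

definition feasible :: "'x classifier set \<Rightarrow> ('x \<times> int \<times> nat) list \<Rightarrow> real \<Rightarrow> ('x classifier \<Rightarrow> real) \<Rightarrow> bool" where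
  "feasible H D \<gamma> \<pi> \<longleftrightarrow> is_dist H \<pi> \<and> (\<forall>j\<in>{-1, 1::int}. FPR H D j \<pi> - FPR H D (-j) \<pi> \<le> \<gamma>)"

definition OPT :: "'x classifier set \<Rightarrow> nat \<Rightarrow> (nat \<Rightarrow> 'x \<times> int) \<Rightarrow> (nat \<Rightarrow> nat) \<Rightarrow> (nat \<Rightarrow> real)
    \<Rightarrow> ('x \<times> int \<times> nat) list \<Rightarrow> real \<Rightarrow> real" where
  "OPT H n X Y w D \<gamma> = Inf {objective H n X Y w \<pi> | \<pi>. feasible H D \<gamma> \<pi>}"

end

theory Submission
  imports Defs
begin

text \<open>Both constraint functionals and the objective are linear in \<open>\<pi>\<close>. Given \<open>\<pi>\<close> feasible for
  \<open>\<gamma>\<close> whose gap \<open>g = FPR\<^sub>1(\<pi>) - FPR\<^sub>-\<^sub>1(\<pi>)\<close> exceeds \<open>\<gamma>'\<close> in absolute value, move weight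
  \<open>\<alpha> = (|g| - \<gamma>')/(|g| + 1)\<close> onto the indicator of the group with the smaller false positive
  rate. Its gap is \<open>\<plusminus>1\<close>, so the gap of the mixture has absolute value exactly \<open>\<gamma>'\<close>, while the
  objective, a weighted error in \<open>[0, 1]\<close>, grows by at most \<open>\<alpha> \<le> |g| - \<gamma>' \<le> \<gamma> - \<gamma>'\<close>.\<close>

definition mix :: "real \<Rightarrow> ('a \<Rightarrow> real) \<Rightarrow> ('a \<Rightarrow> real) \<Rightarrow> 'a \<Rightarrow> real" where
  "mix \<alpha> \<pi> \<sigma> h = (1 - \<alpha>) * \<pi> h + \<alpha> * \<sigma> h"

definition point_mass :: "'a \<Rightarrow> 'a \<Rightarrow> real" where
  "point_mass h0 h = (if h = h0 then 1 else 0)"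

lemma sum_mix_mult:
  "(\<Sum>h\<in>H. mix \<alpha> \<pi> \<sigma> h * f h) = (1 - \<alpha>) * (\<Sum>h\<in>H. \<pi> h * f h) + \<alpha> * (\<Sum>h\<in>H. \<sigma> h * f h)"
  unfolding mix_def distrib_right sum.distrib by (simp add: sum_distrib_left mult.assoc)

lemma sum_point_mass_mult:
  assumes "finite H" "h0 \<in> H"
  shows "(\<Sum>h\<in>H. point_mass h0 h * f h) = f h0"
proof -
  have "(\<Sum>h\<in>H. point_mass h0 h * f h) = (\<Sum>h\<in>H. if h = h0 then f h else 0)"
    by (intro sum.cong) (auto simp: point_mass_def)
  then show ?thesis
    using assms by simp
qed

lemma is_dist_mix:
  assumes "is_dist H \<pi>" "is_dist H \<sigma>" "0 \<le> \<alpha>" "\<alpha> \<le> 1"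
  shows "is_dist H (mix \<alpha> \<pi> \<sigma>)"
  using assms sum_mix_mult[where f = "\<lambda>_. 1" and H = H]
  by (auto simp: is_dist_def mix_def)

lemma is_dist_point_mass:
  assumes "finite H" "h0 \<in> H"
  shows "is_dist H (point_mass h0)"
  using assms by (simp add: is_dist_def point_mass_def)

lemma FPR_mix: "FPR H D j (mix \<alpha> \<pi> \<sigma>) = (1 - \<alpha>) * FPR H D j \<pi> + \<alpha> * FPR H D j \<sigma>"
  unfolding FPR_def by (rule sum_mix_mult)

lemma FPR_point_mass:
  assumes "finite H" "h0 \<in> H"
  shows "FPR H D j (point_mass h0) = cond_fpr D h0 j"
  unfolding FPR_def using assms by (rule sum_point_mass_mult)

lemma objective_mix:
  "objective H n X Y w (mix \<alpha> \<pi> \<sigma>) =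
     (1 - \<alpha>) * objective H n X Y w \<pi> + \<alpha> * objective H n X Y w \<sigma>"
  unfolding objective_def by (rule sum_mix_mult)

lemma objective_bounds:
  assumes "is_dist H \<pi>" "\<forall>j<n. w j \<ge> 0" "(\<Sum>j<n. w j) = 1"
  shows "0 \<le> objective H n X Y w \<pi>" "objective H n X Y w \<pi> \<le> 1"
proof -
  have err: "0 \<le> (\<Sum>j<n. w j * (if h (X j) \<noteq> Y j then 1 else 0))"
    "(\<Sum>j<n. w j * (if h (X j) \<noteq> Y j then 1 else 0)) \<le> 1" for h
    using assms(2) sum_mono[of "{..<n}" "\<lambda>j. w j * (if h (X j) \<noteq> Y j then 1 else 0)" w]
    by (auto simp: assms(3) intro: sum_nonneg)
  show "0 \<le> objective H n X Y w \<pi>"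
    using assms(1) err(1) unfolding objective_def is_dist_def by (auto intro: sum_nonneg)
  have "objective H n X Y w \<pi> \<le> (\<Sum>h\<in>H. \<pi> h * 1)"
    using assms(1) err(2) unfolding objective_def is_dist_def
    by (intro sum_mono mult_left_mono) auto
  then show "objective H n X Y w \<pi> \<le> 1"
    using assms(1) by (simp add: is_dist_def)
qed

definition fpr_gap :: "'x classifier set \<Rightarrow> ('x \<times> int \<times> nat) list \<Rightarrow> ('x classifier \<Rightarrow> real) \<Rightarrow> real" where
  "fpr_gap H D \<pi> = FPR H D 1 \<pi> - FPR H D (-1) \<pi>"

lemma feasible_iff_abs_fpr_gap:
  "feasible H D \<gamma> \<pi> \<longleftrightarrow> is_dist H \<pi> \<and> \<bar>fpr_gap H D \<pi>\<bar> \<le> \<gamma>"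
  by (auto simp: feasible_def fpr_gap_def)

lemma fpr_gap_mix: "fpr_gap H D (mix \<alpha> \<pi> \<sigma>) = (1 - \<alpha>) * fpr_gap H D \<pi> + \<alpha> * fpr_gap H D \<sigma>"
  by (simp add: fpr_gap_def FPR_mix algebra_simps)

definition group_indicator :: "int \<Rightarrow> 'x classifier" where
  "group_indicator j = (\<lambda>(x, a). if a = j then 1 else 0)"

lemma cond_fpr_group_indicator_self:
  assumes "(x, j, 0) \<in> set D"
  shows "cond_fpr D (group_indicator j) j = 1"
proof -
  have "filter (\<lambda>(x, a, y). a = j \<and> y = 0 \<and> group_indicator j (x, a) = 1) D
      = filter (\<lambda>(x, a, y). a = j \<and> y = 0) D"
    by (intro filter_cong) (auto simp: group_indicator_def)
  moreover have "filter (\<lambda>(x, a, y). a = j \<and> y = 0) D \<noteq> []"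
    using assms by (auto simp: filter_empty_conv)
  ultimately show ?thesis
    by (simp add: cond_fpr_def)
qed

lemma cond_fpr_group_indicator_other:
  assumes "k \<noteq> j"
  shows "cond_fpr D (group_indicator j) k = 0"
proof -
  have "filter (\<lambda>(x, a, y). a = k \<and> y = 0 \<and> group_indicator j (x, a) = 1) D = []"
    using assms by (auto simp: group_indicator_def filter_empty_conv)
  then show ?thesis
    by (simp add: cond_fpr_def)
qed

lemma abs_mix_toward_opposite_sign:
  fixes a \<gamma>' :: real
  assumes "0 \<le> \<gamma>'" "\<gamma>' < \<bar>a\<bar>"
  defines "\<alpha> \<equiv> (\<bar>a\<bar> - \<gamma>') / (\<bar>a\<bar> + 1)"
  shows "\<bar>(1 - \<alpha>) * a - \<alpha> * sgn a\<bar> = \<gamma>'" "0 \<le> \<alpha>" "\<alpha> \<le> 1" "\<alpha> \<le> \<bar>a\<bar> - \<gamma>'"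
proof -
  have pos: "0 < \<bar>a\<bar> + 1" by simp
  have "\<alpha> * (\<bar>a\<bar> + 1) = \<bar>a\<bar> - \<gamma>'"
    using pos by (simp add: \<alpha>_def)
  then have "(1 - \<alpha>) * \<bar>a\<bar> - \<alpha> = \<gamma>'"
    by (simp add: algebra_simps)
  moreover have "(1 - \<alpha>) * a - \<alpha> * sgn a = sgn a * ((1 - \<alpha>) * \<bar>a\<bar> - \<alpha>)"
    by (simp add: algebra_simps abs_sgn)
  moreover have "a \<noteq> 0"
    using assms(1,2) by auto
  ultimately show "\<bar>(1 - \<alpha>) * a - \<alpha> * sgn a\<bar> = \<gamma>'"
    using assms(1) by (simp add: abs_mult)
  show "0 \<le> \<alpha>" "\<alpha> \<le> 1"
    using assms(1,2) pos by (simp_all add: \<alpha>_def field_simps)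
  have "(\<bar>a\<bar> - \<gamma>') * 1 \<le> (\<bar>a\<bar> - \<gamma>') * (\<bar>a\<bar> + 1)"
    using assms(2) by (intro mult_left_mono) auto
  then show "\<alpha> \<le> \<bar>a\<bar> - \<gamma>'"
    using pos by (simp add: \<alpha>_def divide_le_eq)
qed

lemma cInf_le_cInf_add:
  fixes A B :: "'a :: {conditionally_complete_linorder, linordered_ab_group_add} set"
  assumes "A \<noteq> {}" "bdd_below B" "\<And>a. a \<in> A \<Longrightarrow> \<exists>b\<in>B. b \<le> a + c"
  shows "Inf B \<le> Inf A + c"
proof -
  have "Inf B - c \<le> Inf A"
  proof (rule cInf_greatest[OF assms(1)])
    fix a assume "a \<in> A"
    then obtain b where "b \<in> B" "b \<le> a + c"
      using assms(3) by blast
    then show "Inf B - c \<le> a"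
      using cInf_lower[OF _ assms(2)] by (fastforce simp: algebra_simps)
  qed
  then show ?thesis
    by (simp add: algebra_simps)
qed

locale fair_classification =
  fixes H :: "'x classifier set" and n :: nat and X :: "nat \<Rightarrow> 'x \<times> int"
    and Y :: "nat \<Rightarrow> nat" and w :: "nat \<Rightarrow> real" and D :: "('x \<times> int \<times> nat) list"
  assumes finite_H: "finite H"
    and group_indicator_in_H: "\<And>k. k \<in> {-1, 1} \<Longrightarrow> group_indicator k \<in> H"
    and negative_example: "\<And>k. k \<in> {-1, 1} \<Longrightarrow> \<exists>x. (x, k, 0) \<in> set D"
    and weights_nonneg: "\<forall>j<n. w j \<ge> 0"
    and weights_sum: "(\<Sum>j<n. w j) = 1"
begin

lemma is_dist_group_indicator:
  assumes "k \<in> {-1, 1}"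
  shows "is_dist H (point_mass (group_indicator k))"
  using assms finite_H group_indicator_in_H by (intro is_dist_point_mass)

lemma fpr_gap_point_mass_group_indicator:
  assumes "k \<in> {-1, 1}"
  shows "fpr_gap H D (point_mass (group_indicator k)) = of_int k"
proof -
  obtain x where "(x, k, 0) \<in> set D"
    using negative_example[OF assms] by blast
  then show ?thesis
    using assms finite_H group_indicator_in_H[OF assms]
    by (auto simp: fpr_gap_def FPR_point_mass cond_fpr_group_indicator_self
        cond_fpr_group_indicator_other)
qed

lemma feasible_tighten:
  assumes "feasible H D \<gamma> \<pi>" "0 \<le> \<gamma>'" "\<gamma>' \<le> \<gamma>"
  shows "\<exists>\<pi>'. feasible H D \<gamma>' \<pi>' \<and> objective H n X Y w \<pi>' \<le> objective H n X Y w \<pi> + (\<gamma> - \<gamma>')"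
proof (cases "feasible H D \<gamma>' \<pi>")
  case True
  then show ?thesis
    using assms(3) by force
next
  case False
  define g where "g = fpr_gap H D \<pi>"
  have \<pi>: "is_dist H \<pi>" "\<bar>g\<bar> \<le> \<gamma>"
    using assms(1) by (auto simp: feasible_iff_abs_fpr_gap g_def)
  with False have g_large: "\<gamma>' < \<bar>g\<bar>"
    by (auto simp: feasible_iff_abs_fpr_gap g_def)
  define k :: int where "k = (if g > 0 then -1 else 1)"
  have k: "k \<in> {-1, 1}" "of_int k = - sgn g"
    using g_large assms(2) by (auto simp: k_def)
  define \<sigma> :: "'x classifier \<Rightarrow> real" where "\<sigma> = point_mass (group_indicator k)"
  define \<alpha> where "\<alpha> = (\<bar>g\<bar> - \<gamma>') / (\<bar>g\<bar> + 1)"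
  note \<alpha> = abs_mix_toward_opposite_sign[OF assms(2) g_large, folded \<alpha>_def]
  have "fpr_gap H D (mix \<alpha> \<pi> \<sigma>) = (1 - \<alpha>) * g - \<alpha> * sgn g"
    using k by (simp add: fpr_gap_mix \<sigma>_def fpr_gap_point_mass_group_indicator g_def)
  then have feasible: "feasible H D \<gamma>' (mix \<alpha> \<pi> \<sigma>)"
    using \<alpha> \<pi>(1) is_dist_group_indicator[OF k(1)]
    by (simp add: feasible_iff_abs_fpr_gap \<sigma>_def is_dist_mix)
  have "objective H n X Y w \<sigma> \<le> 1"
    unfolding \<sigma>_def
    using objective_bounds(2)[OF is_dist_group_indicator[OF k(1)] weights_nonneg weights_sum] .
  then have "objective H n X Y w (mix \<alpha> \<pi> \<sigma>) \<le> (1 - \<alpha>) * objective H n X Y w \<pi> + \<alpha> * 1"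
    unfolding objective_mix using \<alpha>(2) by (simp add: mult_left_le)
  also have "\<dots> \<le> objective H n X Y w \<pi> + \<alpha>"
    using objective_bounds(1)[OF \<pi>(1) weights_nonneg weights_sum] \<alpha>(2)
    by (simp add: algebra_simps)
  also have "\<dots> \<le> objective H n X Y w \<pi> + (\<gamma> - \<gamma>')"
    using \<alpha>(4) \<pi>(2) by simp
  finally show ?thesis
    using feasible by blast
qed

lemma feasible_exists:
  assumes "0 \<le> \<gamma>"
  shows "\<exists>\<pi>. feasible H D \<gamma> \<pi>"
proof -
  define \<pi> :: "'x classifier \<Rightarrow> real" where
    "\<pi> = mix (1/2) (point_mass (group_indicator 1)) (point_mass (group_indicator (-1)))"
  have "is_dist H \<pi>"
    unfolding \<pi>_def by (intro is_dist_mix is_dist_group_indicator) auto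
  moreover have "fpr_gap H D \<pi> = 0"
    by (simp add: \<pi>_def fpr_gap_mix fpr_gap_point_mass_group_indicator)
  ultimately show ?thesis
    using assms by (auto simp: feasible_iff_abs_fpr_gap)
qed

lemma OPT_tighten_le:
  assumes "0 \<le> \<gamma>'" "\<gamma>' \<le> \<gamma>"
  shows "OPT H n X Y w D \<gamma>' \<le> OPT H n X Y w D \<gamma> + (\<gamma> - \<gamma>')"
  unfolding OPT_def
proof (rule cInf_le_cInf_add)
  show "{objective H n X Y w \<pi> |\<pi>. feasible H D \<gamma> \<pi>} \<noteq> {}"
    using feasible_exists[of \<gamma>] assms by auto
  show "bdd_below {objective H n X Y w \<pi> |\<pi>. feasible H D \<gamma>' \<pi>}"
    using objective_bounds(1)[OF _ weights_nonneg weights_sum]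
    by (intro bdd_belowI[of _ 0]) (auto simp: feasible_def)
  show "\<exists>b\<in>{objective H n X Y w \<pi> |\<pi>. feasible H D \<gamma>' \<pi>}. b \<le> a + (\<gamma> - \<gamma>')"
    if "a \<in> {objective H n X Y w \<pi> |\<pi>. feasible H D \<gamma> \<pi>}" for a
    using that feasible_tighten[OF _ assms] by blast
qed

end

theorem lemma11:
  fixes H :: "'x classifier set" and n :: nat and X :: "nat \<Rightarrow> 'x \<times> int"
    and Y :: "nat \<Rightarrow> nat" and w :: "nat \<Rightarrow> real" and D :: "('x \<times> int \<times> nat) list"
    and \<gamma> \<nu> :: real
  assumes "finite H"
    and "\<forall>h\<in>H. \<forall>p. h p \<in> {0, 1}"
    and "(\<lambda>(x, a). if a = 1 then 1 else 0) \<in> H"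
    and "(\<lambda>(x, a). if a = -1 then 1 else 0) \<in> H"
    and "\<forall>j<n. snd (X j) \<in> {-1, 1}"
    and "\<forall>j<n. Y j \<in> {0, 1}"
    and "\<forall>j<n. w j \<ge> 0"
    and "(\<Sum>j<n. w j) = 1"
    and "\<forall>(x, a, y)\<in>set D. a \<in> {-1, 1} \<and> y \<in> {0, 1}"
    and "\<exists>x. (x, 1, 0) \<in> set D"
    and "\<exists>x. (x, -1, 0) \<in> set D"
    and "\<nu> > 0" and "\<gamma> > 2 * \<nu>"
  shows "OPT H n X Y w D (\<gamma> - 2 * \<nu>) - OPT H n X Y w D \<gamma> \<le> 2 * \<nu>"
proof -
  interpret fair_classification H n X Y w D
    using assms(1,3,4,7,8,10,11) by unfold_locales (auto simp: group_indicator_def)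
  show ?thesis
    using OPT_tighten_le[of "\<gamma> - 2 * \<nu>" \<gamma>] assms(12,13) by simp
qed

end
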